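(* Let $p>2$, and let $F$, $a$, $K$, $G=\langle\sigma\rangle$, $J$, $J_i$, $N$, $M_\gamma$ be as in the context. Let $\gamma\in K^\times$ with $[\gamma]\neq[1]$, and let $l=\dim_{\mathbb{F}_p}M_\gamma$ (so $[\gamma]\in J_l\setminus J_{l-1}$). (a) If $3\le l\le p$, then there exists $[\alpha]\in J$ such that $\langle N([\alpha])\rangle = M_\gamma^G$. (b) If $l=2$ and $\gamma$ cannot be written as $\gamma=(\sqrt[p]{a})^{r}\gamma_1$ with $r\in\mathbb{Z}$ and $[\gamma_1]\in J_1$, then there exist $t\in\mathbb{Z}$ and $[\alpha]\in J$ such that $\langle N([\alpha])\rangle = \big(M_{(\sqrt[p]{a})^{t}\gamma}\big)^G$.
   Context: Let $p$ be a prime and $F$ a field of characteristic different from $p$ containing a primitive $p$th root of unity $\xi_p$. Let $a\in F^\times\setminus F^{\times p}$, fix a $p$th root $\sqrt[p]{a}$, and let $K=F(\sqrt[p]{a})$; $K^\times=K\setminus\{0\}$. Let $G=\mathrm{Gal}(K/F)=\langle\sigma\rangle$, where $\sigma(\sqrt[p]{a})/\sqrt[p]{a}=\xi_p$. Let $J=K^\times/K^{\times p}$, an $\mathbb{F}_p[G]$-module with elements $[\gamma]$, $\gamma\in K^\times$. Let $N=1+\sigma+\dots+\sigma^{p-1}$, acting on $J$. For $i\ge1$ let $J_i=\ker\big((\sigma-1)^i\colon J\to J\big)$, and $J_0=\{0\}$. For $\gamma\in K^\times$ with $[\gamma]\in J_i\setminus J_{i-1}$, let $\gamma_j=\gamma^{(\sigma-1)^j}$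 and $M_\gamma=\langle[\gamma],[\gamma_1],\dots,[\gamma_{i-1}]\rangle$, the cyclic $\mathbb{F}_p[G]$-submodule of $J$ generated by $[\gamma]$; it has $\mathbb{F}_p$-dimension $i$. $\langle\cdot\rangle$ denotes $\mathbb{F}_p$-span and $V^G$ the $G$-fixed submodule. *)

theory Defs
  imports Main "HOL-Computational_Algebra.Primes"
begin

text \<open>The whole type 'k plays the role of K = F(\<theta>); F is a subfield given as a set.\<close>

definition is_subfield :: "'k::field set \<Rightarrow> bool" where
  "is_subfield L \<longleftrightarrow> 0 \<in> L \<and> 1 \<in> L \<and>
     (\<forall>x\<in>L. \<forall>y\<in>L. x + y \<in> L \<and> x * y \<in> L) \<and>
     (\<forall>x\<in>L. - x \<in> L \<and> inverse x \<in> L)"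

definition gen_field :: "'k::field set \<Rightarrow> 'k \<Rightarrow> 'k set" where
  "gen_field F \<theta> = \<Inter>{L. is_subfield L \<and> F \<subseteq> L \<and> \<theta> \<in> L}"

text \<open>Classes in J = K^x / K^x^p: [x] = [y] iff x = y * e^p for some nonzero e.\<close>
definition same_class :: "nat \<Rightarrow> 'k::field \<Rightarrow> 'k \<Rightarrow> bool" where
  "same_class p x y \<longleftrightarrow> (\<exists>e. e \<noteq> 0 \<and> x = y * e ^ p)"

text \<open>Preimage in K^x of the F_p-span in J of the classes of the (nonzero) elements of S.
  (J is written multiplicatively and has exponent p, so the F_p-span is the submonoid
  generated by the classes, together with the trivial class.)\<close>
inductive_set pspan :: "nat \<Rightarrow> 'k::field set \<Rightarrow> 'k set" for p S where
  gen: "s \<in> S \<Longrightarrow> s \<noteq> 0 \<Longrightarrow> s \<in> pspan p S"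
| pw:  "e \<noteq> 0 \<Longrightarrow> e ^ p \<in> pspan p S"
| mult: "x \<in> pspan p S \<Longrightarrow> y \<in> pspan p S \<Longrightarrow> x * y \<in> pspan p S"

text \<open>(\<sigma>-1)^j acting on representatives: \<gamma>_j.\<close>
definition sigma_minus_one_pow :: "('k::field \<Rightarrow> 'k) \<Rightarrow> nat \<Rightarrow> 'k \<Rightarrow> 'k" where
  "sigma_minus_one_pow \<sigma> j = ((\<lambda>x. \<sigma> x / x) ^^ j)"

text \<open>The norm N = 1 + \<sigma> + ... + \<sigma>^(p-1), multiplicatively.\<close>
definition normK :: "nat \<Rightarrow> ('k::field \<Rightarrow> 'k) \<Rightarrow> 'k \<Rightarrow> 'k" where
  "normK p \<sigma> x = (\<Prod>i<p. (\<sigma> ^^ i) x)"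

text \<open>Preimage of the cyclic F_p[G]-submodule M_x of J generated by [x].\<close>
definition cycmod :: "nat \<Rightarrow> ('k::field \<Rightarrow> 'k) \<Rightarrow> 'k \<Rightarrow> 'k set" where
  "cycmod p \<sigma> x = pspan p (range (\<lambda>i. (\<sigma> ^^ i) x))"

text \<open>Preimage of the G-fixed part M_x^G.\<close>
definition cycmod_fix :: "nat \<Rightarrow> ('k::field \<Rightarrow> 'k) \<Rightarrow> 'k \<Rightarrow> 'k set" where
  "cycmod_fix p \<sigma> x = {y \<in> cycmod p \<sigma> x. same_class p (\<sigma> y) y}"

end

theory Submission
  imports Defs "HOL-Computational_Algebra.Polynomial"
begin

text \<open>Write \<delta> x = \<sigma> x / x, so that [\<delta> x] = (\<sigma> - 1)[x] in J. If [\<gamma>] has length l, then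
  M_\<gamma> is filtered by the spans of [\<delta>^k \<gamma>], ..., [\<delta>^(l-1) \<gamma>], and a \<sigma>-fixed class can be pushed
  down this filtration: its coefficient at [\<delta>^k \<gamma>] is detected by \<delta>^(l-1-k), and p is prime.
  Hence M_\<gamma>^G is spanned by [\<delta>^(l-1) \<gamma>], and it remains to write \<delta>^(l-1) \<gamma> as a norm modulo
  p-th powers.

  Put \<beta> = \<delta>^(l-2) \<gamma>, so \<delta>^2 \<beta> = f^p. The element Q x = \<Prod>i<p. (\<sigma>^i x)^i satisfies
  \<delta> (Q x) = x^p / N x; applied to f and to \<delta> \<beta> it gives N f = 1, so f = \<delta> g by Hilbert 90,
  and for odd p then N \<beta> = w^p and \<delta> \<beta> = \<delta> w \<cdot> g^p / N g. If l \<ge> 3, then \<beta> is itself a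
  \<delta>-image, N \<beta> = 1, w is a root of unity, hence \<sigma>-fixed, and [\<delta>^(l-1) \<gamma>] = [N (g^(-1))]. If
  l = 2, \<delta> w = \<xi>^j is absorbed by replacing \<gamma> with \<theta>^(-j) \<gamma>, as \<delta> \<theta> = \<xi>; the hypothesis
  on \<gamma> keeps the length of the twisted element equal to 2.\<close>

section \<open>Roots of unity of prime order\<close>

lemma roots_of_unity_finite_card:
  assumes "n > 0"
  shows "finite {z::'k::field. z ^ n = 1}" and "card {z::'k::field. z ^ n = 1} \<le> n"
proof -
  let ?q = "monom (1::'k) n + [:-1:]"
  have deg: "degree ?q = n"
    using assms by (subst degree_add_eq_left) (auto simp: degree_monom_eq)
  then have "?q \<noteq> 0" using assms by auto
  moreover have roots: "{z::'k. z ^ n = 1} = {z. poly ?q z = 0}" by (simp add: poly_monom)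
  ultimately show "finite {z::'k. z ^ n = 1}" "card {z::'k. z ^ n = 1} \<le> n"
    using poly_roots_finite card_poly_roots_bound deg by fastforce+
qed

lemma prime_root_of_unity_power_ne_1:
  fixes \<xi> :: "'k::field"
  assumes "prime p" "\<xi> ^ p = 1" "\<xi> \<noteq> 1" "0 < k" "k < p"
  shows "\<xi> ^ k \<noteq> 1"
proof
  assume "\<xi> ^ k = 1"
  have "coprime k p"
    using assms by (metis coprime_commute nat_dvd_not_less prime_imp_coprime)
  then obtain x y where "k * x = p * y + 1"
    using bezout_nat[of k p] assms by (auto simp: coprime_iff_gcd_eq_1 gcd.commute)
  then have "\<xi> ^ (k * x) = \<xi>"
    using \<open>\<xi> ^ p = 1\<close> by (simp add: power_add power_mult)
  with \<open>\<xi> ^ k = 1\<close> \<open>\<xi> \<noteq> 1\<close> show False by (simp add: power_mult)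
qed

lemma roots_of_unity_eq_powers:
  fixes \<xi> :: "'k::field"
  assumes p: "prime p" and \<xi>: "\<xi> ^ p = 1" "\<xi> \<noteq> 1"
  shows "{z. z ^ p = 1} = (\<lambda>j. \<xi> ^ j) ` {..<p}"
proof -
  have p0: "p > 0" using p prime_gt_0_nat by blast
  have "inj_on (\<lambda>j. \<xi> ^ j) {..<p}"
  proof (rule linorder_inj_onI')
    fix i j assume "j \<in> {..<p}" "i < j"
    then have "\<xi> ^ (j - i) \<noteq> 1" using prime_root_of_unity_power_ne_1[OF p \<xi>] by simp
    moreover have "\<xi> ^ j = \<xi> ^ i * \<xi> ^ (j - i)" using \<open>i < j\<close> by (simp flip: power_add)
    moreover have "\<xi> \<noteq> 0" using \<xi> p0 by (metis power_0_left zero_neq_one not_gr0)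
    ultimately show "\<xi> ^ i \<noteq> \<xi> ^ j" by auto
  qed
  then have card: "card ((\<lambda>j. \<xi> ^ j) ` {..<p}) = p" by (simp add: card_image)
  have sub: "(\<lambda>j. \<xi> ^ j) ` {..<p} \<subseteq> {z. z ^ p = 1}"
    using \<xi> by (auto simp flip: power_mult simp: mult.commute[of _ p] power_mult)
  have fin: "finite {z::'k. z ^ p = 1}" and le: "card {z::'k. z ^ p = 1} \<le> p"
    using roots_of_unity_finite_card[OF p0] by blast+
  have "card ((\<lambda>j. \<xi> ^ j) ` {..<p}) = card {z::'k. z ^ p = 1}"
    using card_mono[OF fin sub] card le by linarith
  then show ?thesis using card_subset_eq[OF fin sub] by simp
qed

lemma sum_prime_root_of_unity_powers:
  fixes \<xi> :: "'k::field"
  assumes "prime p" "\<xi> ^ p = 1" "\<xi> \<noteq> 1" "0 < k" "k < p"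
  shows "(\<Sum>i<p. \<xi> ^ (i * k)) = 0"
proof -
  have "(\<Sum>i<p. \<xi> ^ (i * k)) = (\<Sum>i<p. (\<xi> ^ k) ^ i)"
    by (simp add: power_mult[symmetric] mult.commute)
  also have "\<dots> = ((\<xi> ^ k) ^ p - 1) / (\<xi> ^ k - 1)"
    using prime_root_of_unity_power_ne_1[OF assms] by (simp add: geometric_sum)
  also have "(\<xi> ^ k) ^ p = 1"
    using \<open>\<xi> ^ p = 1\<close> by (metis power_mult mult.commute power_one)
  finally show ?thesis by simp
qed

lemma prime_root_of_unity_transform_eq_0:
  fixes \<xi> :: "'k::field" and c :: "nat \<Rightarrow> 'k"
  assumes "prime p" "\<xi> ^ p = 1" "\<xi> \<noteq> 1"
    and zero: "\<And>i. i < p \<Longrightarrow> (\<Sum>k<p. c k * \<xi> ^ (i * k)) = 0"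
  shows "of_nat p * c 0 = 0"
proof -
  have "0 = (\<Sum>i<p. \<Sum>k<p. c k * \<xi> ^ (i * k))" using zero by simp
  also have "\<dots> = (\<Sum>k<p. c k * (\<Sum>i<p. \<xi> ^ (i * k)))"
    by (subst sum.swap) (simp add: sum_distrib_left)
  also have "\<dots> = (\<Sum>k<p. if k = 0 then of_nat p * c 0 else 0)"
    by (rule sum.cong) (auto simp: sum_prime_root_of_unity_powers[OF assms(1-3)])
  also have "\<dots> = of_nat p * c 0"
    using assms(1) prime_gt_0_nat by simp
  finally show ?thesis by simp
qed

section \<open>Spans of classes modulo p-th powers\<close>

lemma same_class_1_iff: "same_class p y 1 \<longleftrightarrow> (\<exists>e. e \<noteq> 0 \<and> y = e ^ p)"
  by (simp add: same_class_def)

lemma same_class_1_mult: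
  "same_class p x 1 \<Longrightarrow> same_class p y 1 \<Longrightarrow> same_class p (x * y) (1::'k::field)"
  unfolding same_class_1_iff by (metis mult_eq_0_iff power_mult_distrib)

lemma same_class_1_of_coprime_power:
  fixes x u :: "'k::field"
  assumes "prime p" "\<not> p dvd e" "x \<noteq> 0" "u \<noteq> 0" "x ^ e = u ^ p"
  shows "same_class p x 1"
proof -
  have "coprime e p"
    using assms by (metis coprime_commute prime_imp_coprime)
  moreover have "e \<noteq> 0" using assms(2) by (metis dvd_0_right)
  ultimately obtain s t where st: "e * s = p * t + 1"
    using bezout_nat[of e p] by (auto simp: coprime_iff_gcd_eq_1)
  have "x * (x ^ t) ^ p = x ^ (e * s)"
    by (simp add: st power_add power_mult[symmetric] mult.commute)
  also have "\<dots> = (u ^ p) ^ s"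
    by (simp add: power_mult assms(5))
  also have "\<dots> = (u ^ s) ^ p"
    by (simp add: power_mult[symmetric] mult.commute)
  finally have "x * (x ^ t) ^ p = (u ^ s) ^ p" .
  then have "x = (u ^ s / x ^ t) ^ p"
    using assms(3) by (simp add: power_divide field_simps)
  then show ?thesis
    using assms(3,4) by (auto simp: same_class_def intro!: exI[of _ "u ^ s / x ^ t"])
qed

lemma pspan_nonzero: "y \<in> pspan p S \<Longrightarrow> y \<noteq> (0::'k::field)"
  by (induction rule: pspan.induct) auto

lemma pspan_one: "(1::'k::field) \<in> pspan p S"
  using pspan.pw[of "1::'k" p S] by simp

lemma pspan_pth_power: "same_class p y 1 \<Longrightarrow> y \<in> pspan p (S::'k::field set)"
  by (auto simp: same_class_1_iff intro: pspan.pw)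

lemma pspan_mult_pth_power:
  "y \<in> pspan p S \<Longrightarrow> e \<noteq> 0 \<Longrightarrow> y * e ^ p \<in> pspan p (S::'k::field set)"
  by (rule pspan.mult) (auto intro: pspan.pw)

lemma pspan_power: "y \<in> pspan p S \<Longrightarrow> y ^ n \<in> pspan p (S::'k::field set)"
  by (induction n) (auto intro: pspan.mult pspan_one)

lemma pspan_inverse:
  assumes "p > 0" and "y \<in> pspan p (S::'k::field set)"
  shows "inverse y \<in> pspan p S"
  using assms(2)
proof (induction rule: pspan.induct)
  case (gen s)
  have "inverse s = s ^ (p - 1) * inverse s ^ p"
    using \<open>p > 0\<close> \<open>s \<noteq> 0\<close>
    by (cases p) (simp_all add: power_mult_distrib[symmetric] mult.assoc[symmetric])
  then show ?case
    using gen by (metis pspan.gen pspan_mult_pth_power pspan_power inverse_nonzero_iff_nonzero)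
next
  case (pw e)
  then show ?case using pspan.pw[of "inverse e" p S] by (simp add: power_inverse)
qed (simp add: pspan.mult)

lemma pspan_image:
  fixes h :: "'k::field \<Rightarrow> 'k"
  assumes mult: "\<And>x y. h (x * y) = h x * h y" and one: "h 1 = 1"
    and nonzero: "\<And>x. x \<noteq> 0 \<Longrightarrow> h x \<noteq> 0"
    and gen: "\<And>s. s \<in> S \<Longrightarrow> s \<noteq> 0 \<Longrightarrow> h s \<in> pspan p S'"
  shows "h ` pspan p S \<subseteq> pspan p S'"
proof -
  have power: "h (x ^ n) = h x ^ n" for x n
    by (induction n) (simp_all add: mult one)
  have "h y \<in> pspan p S'" if "y \<in> pspan p S" for y
    using that by (induction rule: pspan.induct) (auto intro: gen pspan.pw pspan.mult simp: mult power nonzero)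
  then show ?thesis by blast
qed

lemma pspan_subset_pspan:
  assumes "\<And>s. s \<in> S \<Longrightarrow> s \<noteq> 0 \<Longrightarrow> s \<in> pspan p S'"
  shows "pspan p S \<subseteq> pspan p (S'::'k::field set)"
  using pspan_image[of id S p S'] assms by simp

lemma pspan_empty: "y \<in> pspan p {} \<Longrightarrow> same_class p y (1::'k::field)"
proof (induction rule: pspan.induct)
  case (mult x y)
  then show ?case by (intro same_class_1_mult mult.IH)
qed (auto simp: same_class_def)

lemma pspan_insert_decompose:
  "y \<in> pspan p (insert x S) \<Longrightarrow> \<exists>e z. z \<in> pspan p S \<and> y = x ^ e * (z::'k::field)"
proof (induction rule: pspan.induct)
  case (gen s)
  then show ?case
    by (metis insertE mult_1 mult_1_right power_0 power_one_right pspan.gen pspan_one)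
next
  case (pw e)
  then show ?case by (metis mult_1 power_0 pspan.pw)
next
  case (mult y1 y2)
  then obtain e1 z1 e2 z2 where "z1 \<in> pspan p S" "y1 = x ^ e1 * z1" "z2 \<in> pspan p S" "y2 = x ^ e2 * z2"
    by blast
  then show ?case
    by (intro exI[of _ "e1 + e2"] exI[of _ "z1 * z2"]) (auto intro: pspan.mult simp: power_add ac_simps)
qed

lemma pspan_singleton_same_class:
  assumes "same_class p x y" "y \<noteq> (0::'k::field)"
  shows "pspan p {x} = pspan p {y}"
proof -
  obtain e where e: "e \<noteq> 0" "x = y * e ^ p" using assms(1) by (auto simp: same_class_def)
  have x0: "x \<noteq> 0" using e assms(2) by simp
  have y_eq: "y = x * inverse e ^ p" using e by (simp add: power_inverse)
  have "y \<in> pspan p {x}"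
    using pspan_mult_pth_power[OF pspan.gen[of x "{x}"]] x0 e(1) y_eq by simp
  moreover have "x \<in> pspan p {y}"
    using pspan_mult_pth_power[OF pspan.gen[of y "{y}"]] assms(2) e by simp
  ultimately show ?thesis
    by (intro equalityI pspan_subset_pspan) auto
qed

section \<open>The fixed part of a cyclic submodule\<close>

locale pth_power_classes =
  fixes p :: nat and \<sigma> :: "'k::field \<Rightarrow> 'k"
  assumes prime_p: "prime p"
    and sigma_mult: "\<And>x y. \<sigma> (x * y) = \<sigma> x * \<sigma> y"
    and sigma_nonzero: "\<And>x. x \<noteq> 0 \<Longrightarrow> \<sigma> x \<noteq> 0"
begin

lemma p_pos: "p > 0"
  using prime_p prime_gt_0_nat by blast

lemma sigma_one: "\<sigma> 1 = 1"
  using sigma_mult[of 1 1] sigma_nonzero[of 1] by simp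

lemma sigma_power: "\<sigma> (x ^ n) = \<sigma> x ^ n"
  by (induction n) (simp_all add: sigma_one sigma_mult)

lemma funpow_sigma_nonzero: "x \<noteq> 0 \<Longrightarrow> (\<sigma> ^^ n) x \<noteq> 0"
  by (induction n) (simp_all add: sigma_nonzero)

definition delta :: "'k \<Rightarrow> 'k" where
  "delta x = \<sigma> x / x"

lemma sigma_minus_one_pow_eq: "sigma_minus_one_pow \<sigma> j = delta ^^ j"
  by (simp add: sigma_minus_one_pow_def delta_def[abs_def])

lemma sigma_eq_delta: "x \<noteq> 0 \<Longrightarrow> \<sigma> x = x * delta x"
  by (simp add: delta_def)

lemma delta_mult: "delta (x * y) = delta x * delta y"
  by (simp add: delta_def sigma_mult)

lemma delta_one: "delta 1 = 1"
  by (simp add: delta_def sigma_one)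

lemma delta_power: "delta (x ^ n) = delta x ^ n"
  by (simp add: delta_def sigma_power power_divide)

lemma delta_nonzero: "x \<noteq> 0 \<Longrightarrow> delta x \<noteq> 0"
  by (simp add: delta_def sigma_nonzero)

lemma funpow_delta_mult: "(delta ^^ n) (x * y) = (delta ^^ n) x * (delta ^^ n) y"
  by (induction n) (simp_all add: delta_mult)

lemma funpow_delta_power: "(delta ^^ n) (x ^ m) = (delta ^^ n) x ^ m"
  by (induction n) (simp_all add: delta_power)

lemma funpow_delta_nonzero: "x \<noteq> 0 \<Longrightarrow> (delta ^^ n) x \<noteq> 0"
  by (induction n) (simp_all add: delta_nonzero)

lemma same_class_sigma_iff: "y \<noteq> 0 \<Longrightarrow> same_class p (\<sigma> y) y \<longleftrightarrow> same_class p (delta y) 1"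
  by (auto simp: same_class_def delta_def field_simps)

lemma same_class_1_delta: "same_class p y 1 \<Longrightarrow> same_class p (delta y) 1"
  unfolding same_class_1_iff by (metis delta_nonzero delta_power)

lemma same_class_1_funpow_delta: "same_class p y 1 \<Longrightarrow> same_class p ((delta ^^ n) y) 1"
  by (induction n) (simp_all add: same_class_1_delta)

lemma sigma_image_cycmod: "x \<noteq> 0 \<Longrightarrow> \<sigma> ` cycmod p \<sigma> x \<subseteq> cycmod p \<sigma> x"
  unfolding cycmod_def
proof (rule pspan_image)
  fix s assume "x \<noteq> 0" "s \<in> range (\<lambda>i. (\<sigma> ^^ i) x)"
  then obtain i where s: "\<sigma> s = (\<sigma> ^^ Suc i) x" by auto
  show "\<sigma> s \<in> pspan p (range (\<lambda>i. (\<sigma> ^^ i) x))"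
    unfolding s by (rule pspan.gen) (rule rangeI, rule funpow_sigma_nonzero[OF \<open>x \<noteq> 0\<close>])
qed (simp_all add: sigma_mult sigma_one sigma_nonzero)

lemma funpow_delta_in_cycmod:
  assumes "x \<noteq> 0" shows "(delta ^^ i) x \<in> cycmod p \<sigma> x"
proof (induction i)
  case 0
  have "x \<in> range (\<lambda>i. (\<sigma> ^^ i) x)"
    using rangeI[of "\<lambda>i. (\<sigma> ^^ i) x" 0] by simp
  then show ?case
    using assms unfolding cycmod_def by (auto intro: pspan.gen)
next
  case (Suc i)
  then have "\<sigma> ((delta ^^ i) x) \<in> cycmod p \<sigma> x" "inverse ((delta ^^ i) x) \<in> cycmod p \<sigma> x"
    using sigma_image_cycmod[OF assms] pspan_inverse[OF p_pos] by (auto simp: cycmod_def)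
  moreover have "(delta ^^ Suc i) x = \<sigma> ((delta ^^ i) x) * inverse ((delta ^^ i) x)"
    by (simp only: funpow.simps(2) comp_apply delta_def divide_inverse)
  ultimately show ?case
    unfolding cycmod_def by (simp only: pspan.mult)
qed

context
  fixes \<beta> :: 'k and l :: nat
  assumes beta_nonzero: "\<beta> \<noteq> 0"
    and length_le: "same_class p ((delta ^^ l) \<beta>) 1"
    and length_gt: "\<not> same_class p ((delta ^^ (l - 1)) \<beta>) 1"
begin

definition tail_span :: "nat \<Rightarrow> 'k set" where
  "tail_span k = pspan p ((\<lambda>i. (delta ^^ i) \<beta>) ` {k..<l})"

lemma length_pos: "l \<ge> 1"
  using length_le length_gt by (cases l) auto

lemma funpow_delta_in_tail_span:
  assumes "k \<le> i" shows "(delta ^^ i) \<beta> \<in> tail_span k"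
proof (cases "i < l")
  case True
  then show ?thesis
    using assms by (auto simp: tail_span_def funpow_delta_nonzero beta_nonzero intro: pspan.gen)
next
  case False
  then have "(delta ^^ i) \<beta> = (delta ^^ (i - l) \<circ> delta ^^ l) \<beta>"
    by (simp flip: funpow_add add: not_less)
  then show ?thesis
    using same_class_1_funpow_delta[OF length_le] by (simp add: tail_span_def pspan_pth_power)
qed

lemma delta_tail_span:
  assumes "y \<in> tail_span k"
  shows "delta y \<in> tail_span (Suc k)"
proof -
  have "delta ` tail_span k \<subseteq> tail_span (Suc k)"
  proof (unfold tail_span_def, rule pspan_image)
    fix s assume "s \<in> (\<lambda>i. (delta ^^ i) \<beta>) ` {k..<l}"
    then obtain i where "k \<le> i" "delta s = (delta ^^ Suc i) \<beta>" by auto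
    then show "delta s \<in> pspan p ((\<lambda>i. (delta ^^ i) \<beta>) ` {Suc k..<l})"
      using funpow_delta_in_tail_span[of "Suc k" "Suc i"] by (simp add: tail_span_def)
  qed (simp_all add: delta_mult delta_one delta_nonzero)
  then show ?thesis using assms by blast
qed

lemma funpow_delta_tail_span: "y \<in> tail_span k \<Longrightarrow> (delta ^^ m) y \<in> tail_span (k + m)"
  by (induction m) (simp_all add: delta_tail_span)

lemma tail_span_beyond_length: "l \<le> k \<Longrightarrow> y \<in> tail_span k \<Longrightarrow> same_class p y 1"
  by (simp add: tail_span_def pspan_empty)

lemma tail_span_decompose:
  assumes "k < l" "y \<in> tail_span k"
  shows "\<exists>e z. z \<in> tail_span (Suc k) \<and> y = (delta ^^ k) \<beta> ^ e * z"
proof -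
  have "{k..<l} = insert k {Suc k..<l}" using assms(1) by auto
  then show ?thesis
    using pspan_insert_decompose assms(2) by (simp add: tail_span_def)
qed

text \<open>Write y = (\<delta>^k \<beta>)^e z with z \<in> tail_span (k + 1). Applying \<delta>^(l-1-k) kills [y] and [z] and
  sends \<delta>^k \<beta> to \<delta>^(l-1) \<beta>, so [\<delta>^(l-1) \<beta>]^e is trivial; as this class is not, p divides e.\<close>
lemma tail_span_descent:
  assumes k: "Suc k < l" and y: "y \<in> tail_span k" and fixed: "same_class p (delta y) 1"
  shows "y \<in> tail_span (Suc k)"
proof -
  obtain e z where z: "z \<in> tail_span (Suc k)" and y_eq: "y = (delta ^^ k) \<beta> ^ e * z"
    using tail_span_decompose[OF _ y] k by auto
  define m where "m = l - 2 - k"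
  have m: "Suc m + k = l - 1" "l \<le> Suc k + Suc m" using k by (simp_all add: m_def)
  have "same_class p ((delta ^^ m) (delta y)) 1"
    by (rule same_class_1_funpow_delta[OF fixed])
  then obtain u where u: "u \<noteq> 0" "(delta ^^ Suc m) y = u ^ p"
    by (auto simp: same_class_1_iff funpow_swap1)
  have "same_class p ((delta ^^ Suc m) z) 1"
    using funpow_delta_tail_span[OF z] tail_span_beyond_length m(2) by blast
  then obtain w where w: "w \<noteq> 0" "(delta ^^ Suc m) z = w ^ p"
    by (auto simp: same_class_1_iff)
  have "(delta ^^ (l - 1)) \<beta> = (delta ^^ Suc m \<circ> delta ^^ k) \<beta>"
    by (simp only: m(1)[symmetric] funpow_add)
  then have "((delta ^^ (l - 1)) \<beta>) ^ e = (u / w) ^ p"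
    using u w y_eq
    by (simp add: delta_mult delta_power funpow_delta_mult funpow_delta_power power_divide eq_divide_eq)
  then have "p dvd e"
    using same_class_1_of_coprime_power[OF prime_p, of e "(delta ^^ (l - 1)) \<beta>" "u / w"] length_gt
      u w funpow_delta_nonzero[OF beta_nonzero] by auto
  then obtain q where "e = p * q" by blast
  then have "y = z * ((delta ^^ k) \<beta> ^ q) ^ p"
    using y_eq by (simp add: power_mult[symmetric] ac_simps)
  then show ?thesis
    using pspan_mult_pth_power[of z p] z funpow_delta_nonzero[OF beta_nonzero]
    by (simp add: tail_span_def)
qed

lemma tail_span_fixed_in_last:
  assumes "j \<le> l - 1" "y \<in> tail_span (l - 1 - j)" "same_class p (delta y) 1"
  shows "y \<in> tail_span (l - 1)"
  using assms(1,2)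
proof (induction j)
  case (Suc j)
  then have "Suc (l - 1 - Suc j) < l" "Suc (l - 1 - Suc j) = l - 1 - j" by arith+
  then show ?case
    using Suc tail_span_descent[of "l - 1 - Suc j" y] assms(3) by simp
qed simp

lemma tail_span_last: "tail_span (l - 1) = pspan p {(delta ^^ (l - 1)) \<beta>}"
proof -
  have "{l - 1..<l} = {l - 1}" using length_pos by auto
  then show ?thesis by (simp add: tail_span_def)
qed

lemma sigma_image_tail_span_0: "\<sigma> ` tail_span 0 \<subseteq> tail_span 0"
proof (unfold tail_span_def, rule pspan_image)
  fix s assume "s \<in> (\<lambda>i. (delta ^^ i) \<beta>) ` {0..<l}"
  then obtain i where "s = (delta ^^ i) \<beta>" by auto
  then have "\<sigma> s = (delta ^^ i) \<beta> * (delta ^^ Suc i) \<beta>"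
    using sigma_eq_delta funpow_delta_nonzero[OF beta_nonzero] by simp
  then show "\<sigma> s \<in> pspan p ((\<lambda>i. (delta ^^ i) \<beta>) ` {0..<l})"
    using funpow_delta_in_tail_span[of 0 i] funpow_delta_in_tail_span[of 0 "Suc i"]
    by (simp add: tail_span_def pspan.mult)
qed (simp_all add: sigma_mult sigma_one sigma_nonzero)

lemma cycmod_eq_tail_span: "cycmod p \<sigma> \<beta> = tail_span 0"
proof
  have "(\<sigma> ^^ i) \<beta> \<in> tail_span 0" for i
  proof (induction i)
    case 0
    then show ?case using funpow_delta_in_tail_span[of 0 0] by simp
  next
    case (Suc i)
    then show ?case using sigma_image_tail_span_0 by auto
  qed
  then show "cycmod p \<sigma> \<beta> \<subseteq> tail_span 0"
    unfolding cycmod_def tail_span_def by (intro pspan_subset_pspan) auto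
next
  show "tail_span 0 \<subseteq> cycmod p \<sigma> \<beta>"
    using funpow_delta_in_cycmod[OF beta_nonzero]
    unfolding tail_span_def cycmod_def by (intro pspan_subset_pspan) auto
qed

lemma same_class_1_delta_last_span:
  "y \<in> pspan p {(delta ^^ (l - 1)) \<beta>} \<Longrightarrow> same_class p (delta y) 1"
proof (induction rule: pspan.induct)
  case gen
  have "(delta ^^ l) \<beta> = (delta ^^ Suc (l - 1)) \<beta>"
    using length_pos by simp
  then have "(delta ^^ l) \<beta> = delta ((delta ^^ (l - 1)) \<beta>)"
    by simp
  with gen show ?case using length_le by simp
next
  case (pw e)
  then show ?case by (intro same_class_1_delta) (auto simp: same_class_1_iff)
next
  case (mult x y)
  then show ?case by (simp add: delta_mult same_class_1_mult)
qed

lemma cycmod_fix_eq_last_span: "cycmod_fix p \<sigma> \<beta> = pspan p {(delta ^^ (l - 1)) \<beta>}"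
proof
  show "cycmod_fix p \<sigma> \<beta> \<subseteq> pspan p {(delta ^^ (l - 1)) \<beta>}"
  proof
    fix y assume "y \<in> cycmod_fix p \<sigma> \<beta>"
    then have y: "y \<in> tail_span 0" and "same_class p (\<sigma> y) y"
      using cycmod_eq_tail_span by (auto simp: cycmod_fix_def)
    moreover have "y \<noteq> 0"
      using y pspan_nonzero by (auto simp: tail_span_def)
    ultimately have "same_class p (delta y) 1"
      using same_class_sigma_iff by auto
    then show "y \<in> pspan p {(delta ^^ (l - 1)) \<beta>}"
      using tail_span_fixed_in_last[of "l - 1" y] y tail_span_last by simp
  qed
next
  have "pspan p {(delta ^^ (l - 1)) \<beta>} \<subseteq> cycmod p \<sigma> \<beta>"
    unfolding cycmod_eq_tail_span
    using funpow_delta_in_tail_span[of 0 "l - 1"] unfolding tail_span_def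
    by (intro pspan_subset_pspan) auto
  moreover have "y \<noteq> 0" "same_class p (delta y) 1" if "y \<in> pspan p {(delta ^^ (l - 1)) \<beta>}" for y
    using that pspan_nonzero same_class_1_delta_last_span by blast+
  ultimately show "pspan p {(delta ^^ (l - 1)) \<beta>} \<subseteq> cycmod_fix p \<sigma> \<beta>"
    using same_class_sigma_iff by (auto simp: cycmod_fix_def)
qed

end

end

section \<open>Norms and Hilbert 90 in a cyclic extension of degree p\<close>

lemma is_subfield_fixed_points:
  fixes \<tau> :: "'k::field \<Rightarrow> 'k"
  assumes add: "\<And>x y. \<tau> (x + y) = \<tau> x + \<tau> y" and mult: "\<And>x y. \<tau> (x * y) = \<tau> x * \<tau> y"
    and one: "\<tau> 1 = 1"
  shows "is_subfield {x. \<tau> x = x}"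
proof -
  have "\<tau> 0 + \<tau> 0 = \<tau> 0 + 0" using add[of 0 0] by simp
  then have zero: "\<tau> 0 = 0" by (rule add_left_imp_eq)
  have "\<tau> (- x) = - \<tau> x" for x
  proof -
    have "\<tau> x + \<tau> (- x) = 0" using add[of x "- x"] zero by simp
    then show ?thesis by (simp add: add.inverse_unique)
  qed
  moreover have "\<tau> (inverse x) = inverse x" if "\<tau> x = x" for x
  proof (cases "x = 0")
    case False
    then have "x * \<tau> (inverse x) = 1" using mult[of x "inverse x"] one that by simp
    then show ?thesis by (rule inverse_unique[symmetric])
  qed (simp add: zero)
  ultimately show ?thesis
    unfolding is_subfield_def by (simp add: zero one add mult)
qed

lemma gen_field_least: "is_subfield L \<Longrightarrow> F \<subseteq> L \<Longrightarrow> \<theta> \<in> L \<Longrightarrow> gen_field F \<theta> \<subseteq> L"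
  unfolding gen_field_def by blast

lemma funpow_eq_id_of_gen_field:
  fixes \<sigma> :: "'k::field \<Rightarrow> 'k"
  assumes add: "\<And>x y. \<sigma> (x + y) = \<sigma> x + \<sigma> y" and mult: "\<And>x y. \<sigma> (x * y) = \<sigma> x * \<sigma> y"
    and F: "is_subfield F" "\<And>c. c \<in> F \<Longrightarrow> \<sigma> c = c"
    and \<xi>: "\<xi> \<in> F" "\<xi> ^ p = 1" and \<theta>: "\<sigma> \<theta> = \<xi> * \<theta>" "gen_field F \<theta> = UNIV"
  shows "(\<sigma> ^^ p) x = x"
proof -
  have F_fixed: "(\<sigma> ^^ n) c = c" if "c \<in> F" for c n
    using that by (induction n) (simp_all add: F(2))
  have "\<xi> ^ n \<in> F" for n
    using F(1) \<xi>(1) by (induction n) (simp_all add: is_subfield_def)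
  then have "(\<sigma> ^^ n) \<theta> = \<xi> ^ n * \<theta>" for n
    by (induction n) (simp_all add: mult \<theta>(1) F(2) mult_ac)
  then have "\<theta> \<in> {x. (\<sigma> ^^ p) x = x}" using \<xi>(2) by simp
  moreover have "F \<subseteq> {x. (\<sigma> ^^ p) x = x}" using F_fixed by auto
  moreover have "is_subfield {x. (\<sigma> ^^ p) x = x}"
  proof (rule is_subfield_fixed_points)
    show "(\<sigma> ^^ p) (x + y) = (\<sigma> ^^ p) x + (\<sigma> ^^ p) y" for x y
      by (induction p) (simp_all add: add)
    show "(\<sigma> ^^ p) (x * y) = (\<sigma> ^^ p) x * (\<sigma> ^^ p) y" for x y
      by (induction p) (simp_all add: mult)
    show "(\<sigma> ^^ p) 1 = 1"
      using F(1) F_fixed by (simp add: is_subfield_def)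
  qed
  ultimately have "gen_field F \<theta> \<subseteq> {x. (\<sigma> ^^ p) x = x}"
    by (intro gen_field_least)
  then show ?thesis using \<theta>(2) by auto
qed

lemma prod_lessThan_rotate:
  fixes f :: "nat \<Rightarrow> 'a::comm_monoid_mult"
  assumes "f n = f 0"
  shows "(\<Prod>i<n. f (Suc i)) = (\<Prod>i<n. f i)"
proof (cases n)
  case (Suc m)
  then have "(\<Prod>i<n. f (Suc i)) = (\<Prod>i<m. f (Suc i)) * f 0"
    using assms by simp
  also have "\<dots> = (\<Prod>i<n. f i)"
    unfolding Suc by (subst prod.lessThan_Suc_shift) (rule mult.commute)
  finally show ?thesis .
qed simp

lemma sum_lessThan_rotate:
  fixes f :: "nat \<Rightarrow> 'a::comm_monoid_add"
  assumes "f n = f 0"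
  shows "(\<Sum>i<n. f (Suc i)) = (\<Sum>i<n. f i)"
proof (cases n)
  case (Suc m)
  then have "(\<Sum>i<n. f (Suc i)) = (\<Sum>i<m. f (Suc i)) + f 0"
    using assms by simp
  also have "\<dots> = (\<Sum>i<n. f i)"
    unfolding Suc by (subst sum.lessThan_Suc_shift) (rule add.commute)
  finally show ?thesis .
qed simp

lemma sum_lessThan_odd:
  assumes "odd (n::nat)"
  shows "(\<Sum>i<n. i) = n * ((n - 1) div 2)"
  using assms Sum_Ico_nat[of 0 n] by (auto simp: lessThan_atLeast0 elim!: oddE)

locale kummer_extension = pth_power_classes p \<sigma>
  for p :: nat and \<sigma> :: "'k::field \<Rightarrow> 'k" +
  fixes \<xi> \<theta> :: 'k
  assumes char_not_p: "of_nat p \<noteq> (0::'k)"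
    and sigma_add: "\<And>x y. \<sigma> (x + y) = \<sigma> x + \<sigma> y"
    and funpow_sigma_p: "\<And>x. (\<sigma> ^^ p) x = x"
    and xi_root: "\<xi> ^ p = 1" and xi_ne_1: "\<xi> \<noteq> 1" and sigma_xi: "\<sigma> \<xi> = \<xi>"
    and theta_nonzero: "\<theta> \<noteq> 0" and sigma_theta: "\<sigma> \<theta> = \<xi> * \<theta>"
begin

lemma xi_nonzero: "\<xi> \<noteq> 0"
  using xi_root p_pos by (metis power_0_left less_not_refl2 zero_neq_one)

lemma sigma_zero: "\<sigma> 0 = 0"
proof -
  have "\<sigma> 0 + \<sigma> 0 = \<sigma> 0 + 0" using sigma_add[of 0 0] by simp
  then show ?thesis by (rule add_left_imp_eq)
qed

lemma sigma_inverse: "\<sigma> (inverse x) = inverse (\<sigma> x)"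
proof (cases "x = 0")
  case False
  then have "\<sigma> x * \<sigma> (inverse x) = 1"
    using sigma_mult[of x "inverse x"] sigma_one by simp
  then show ?thesis by (rule inverse_unique[symmetric])
qed (simp add: sigma_zero)

lemma sigma_divide: "\<sigma> (x / y) = \<sigma> x / \<sigma> y"
  by (simp add: divide_inverse sigma_mult sigma_inverse)

lemma sigma_sum: "\<sigma> (sum f A) = (\<Sum>i\<in>A. \<sigma> (f i))"
  by (induction A rule: infinite_finite_induct) (simp_all add: sigma_zero sigma_add)

lemma sigma_prod: "\<sigma> (prod f A) = (\<Prod>i\<in>A. \<sigma> (f i))"
  by (induction A rule: infinite_finite_induct) (simp_all add: sigma_one sigma_mult)

lemma funpow_sigma_mult: "(\<sigma> ^^ n) (x * y) = (\<sigma> ^^ n) x * (\<sigma> ^^ n) y"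
  by (induction n) (simp_all add: sigma_mult)

lemma funpow_sigma_power: "(\<sigma> ^^ n) (x ^ m) = (\<sigma> ^^ n) x ^ m"
  by (induction n) (simp_all add: sigma_power)

lemma funpow_sigma_inverse: "(\<sigma> ^^ n) (inverse x) = inverse ((\<sigma> ^^ n) x)"
  by (induction n) (simp_all add: sigma_inverse)

lemma funpow_sigma_theta: "(\<sigma> ^^ n) \<theta> = \<xi> ^ n * \<theta>"
  by (induction n) (simp_all add: sigma_mult sigma_theta sigma_power sigma_xi)

lemma sigma_root_of_unity:
  assumes "z ^ p = 1" shows "\<sigma> z = z"
proof -
  obtain j where "z = \<xi> ^ j"
    using roots_of_unity_eq_powers[OF prime_p xi_root xi_ne_1] assms by blast
  then show ?thesis by (simp add: sigma_power sigma_xi)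
qed

lemma delta_inverse: "delta (inverse x) = inverse (delta x)"
  by (simp add: delta_def sigma_inverse divide_inverse mult.commute)

lemma delta_divide: "delta (x / y) = delta x / delta y"
  by (simp add: divide_inverse delta_mult delta_inverse)

lemma delta_theta: "delta \<theta> = \<xi>"
  using theta_nonzero by (simp add: delta_def sigma_theta)

abbreviation N :: "'k \<Rightarrow> 'k" where
  "N \<equiv> normK p \<sigma>"

lemma norm_mult: "N (x * y) = N x * N y"
  by (simp add: normK_def funpow_sigma_mult prod.distrib)

lemma norm_inverse: "N (inverse x) = inverse (N x)"
  by (simp add: normK_def funpow_sigma_inverse prod_inversef[symmetric, unfolded comp_def])

lemma norm_divide: "N (x / y) = N x / N y"
  by (simp add: divide_inverse norm_mult norm_inverse)

lemma norm_nonzero: "x \<noteq> 0 \<Longrightarrow> N x \<noteq> 0"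
  by (simp add: normK_def funpow_sigma_nonzero)

lemma sigma_norm: "\<sigma> (N x) = N x"
  using prod_lessThan_rotate[of "\<lambda>i. (\<sigma> ^^ i) x" p] funpow_sigma_p
  by (simp add: normK_def sigma_prod)

lemma norm_sigma: "N (\<sigma> x) = \<sigma> (N x)"
  by (simp add: normK_def sigma_prod funpow_swap1)

lemma norm_delta: "x \<noteq> 0 \<Longrightarrow> N (delta x) = 1"
  by (simp add: delta_def norm_divide norm_sigma sigma_norm norm_nonzero)

lemma delta_norm: "x \<noteq> 0 \<Longrightarrow> delta (N x) = 1"
  by (simp add: delta_def sigma_norm norm_nonzero)

text \<open>Q is the multiplicative form of the group-ring element \<Sum>i<p. i \<sigma>^i. Since
  (\<sigma> - 1) \<Sum>i<p. i \<sigma>^i = p - N, one gets delta_Q.\<close>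
definition Q :: "'k \<Rightarrow> 'k" where
  "Q x = (\<Prod>i<p. ((\<sigma> ^^ i) x) ^ i)"

lemma Q_mult: "Q (x * y) = Q x * Q y"
  by (simp add: Q_def funpow_sigma_mult prod.distrib power_mult_distrib)

lemma Q_power: "Q (x ^ m) = Q x ^ m"
  by (simp add: Q_def funpow_sigma_power prod_power_distrib flip: power_mult)
    (simp add: power_mult mult.commute)

lemma Q_inverse: "Q (inverse x) = inverse (Q x)"
  by (simp add: Q_def funpow_sigma_inverse prod_inversef[symmetric, unfolded comp_def] power_inverse)

lemma Q_divide: "Q (x / y) = Q x / Q y"
  by (simp add: divide_inverse Q_mult Q_inverse)

lemma Q_nonzero: "x \<noteq> 0 \<Longrightarrow> Q x \<noteq> 0"
  by (simp add: Q_def funpow_sigma_nonzero)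

lemma Q_sigma: "Q (\<sigma> x) = \<sigma> (Q x)"
  by (simp add: Q_def sigma_prod sigma_power funpow_swap1)

lemma Q_fixed: "\<sigma> x = x \<Longrightarrow> Q x = x ^ (\<Sum>i<p. i)"
proof -
  assume "\<sigma> x = x"
  then have "(\<sigma> ^^ i) x = x" for i by (induction i) simp_all
  then show ?thesis by (simp add: Q_def power_sum)
qed

lemma delta_Q: "x \<noteq> 0 \<Longrightarrow> delta (Q x) = x ^ p / N x"
proof -
  assume x: "x \<noteq> 0"
  have "\<sigma> (Q x) * N x = \<sigma> (Q x) * \<sigma> (N x)" by (simp add: sigma_norm)
  also have "\<dots> = (\<Prod>i<p. ((\<sigma> ^^ Suc i) x) ^ Suc i)"
    by (simp add: Q_def normK_def sigma_prod sigma_power prod.distrib[symmetric] mult.commute)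
  also have "\<dots> = Q x * x ^ p"
    using prod.lessThan_Suc_shift[of "\<lambda>i. ((\<sigma> ^^ i) x) ^ i" p] funpow_sigma_p
    by (simp add: Q_def)
  finally have "\<sigma> (Q x) * N x = Q x * x ^ p" .
  moreover have "Q x \<noteq> 0" "N x \<noteq> 0" using x Q_nonzero norm_nonzero by auto
  ultimately show ?thesis by (simp add: delta_def field_simps)
qed

lemma Q_delta: "x \<noteq> 0 \<Longrightarrow> Q (delta x) = x ^ p / N x"
  using delta_Q by (simp add: delta_def Q_divide Q_sigma)

text \<open>The witness is the inverse of a Lagrange resolvent \<Sum>k<p. (f \<sigma>f \<dots> \<sigma>^(k-1) f) \<sigma>^k z with
  z = \<theta>^i; some such resolvent is nonzero because the powers of \<theta> separate the characters of G.\<close>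
lemma hilbert90:
  assumes f: "f \<noteq> 0" "N f = 1"
  obtains g where "g \<noteq> 0" "f = delta g"
proof -
  define P where "P k = (\<Prod>i<k. (\<sigma> ^^ i) f)" for k
  define R where "R z = (\<Sum>k<p. P k * (\<sigma> ^^ k) z)" for z
  have P_Suc: "P (Suc k) = f * \<sigma> (P k)" for k
    unfolding P_def prod.lessThan_Suc_shift by (simp add: sigma_prod del: prod.lessThan_Suc)
  have R_eq: "f * \<sigma> (R z) = R z" for z
  proof -
    have "f * \<sigma> (R z) = (\<Sum>k<p. P (Suc k) * (\<sigma> ^^ Suc k) z)"
      by (simp add: R_def sigma_sum sum_distrib_left sigma_mult P_Suc mult.assoc)
    also have "\<dots> = R z"
      using sum_lessThan_rotate[of "\<lambda>k. P k * (\<sigma> ^^ k) z" p] f(2) funpow_sigma_p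
      by (simp add: R_def P_def normK_def)
    finally show ?thesis .
  qed
  have "\<exists>i<p. R (\<theta> ^ i) \<noteq> 0"
  proof (rule ccontr)
    assume "\<not> ?thesis"
    moreover have "R (\<theta> ^ i) = \<theta> ^ i * (\<Sum>k<p. P k * \<xi> ^ (i * k))" for i
      by (simp add: R_def funpow_sigma_power funpow_sigma_theta sum_distrib_left power_mult_distrib
          power_mult[symmetric] mult.commute mult.left_commute)
    ultimately have "(\<Sum>k<p. P k * \<xi> ^ (i * k)) = 0" if "i < p" for i
      using that theta_nonzero by auto
    then have "of_nat p * P 0 = 0"
      using prime_root_of_unity_transform_eq_0[OF prime_p xi_root xi_ne_1] by blast
    then show False using char_not_p by (simp add: P_def)
  qed
  then obtain i where R: "R (\<theta> ^ i) \<noteq> 0" by blast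
  have "f = R (\<theta> ^ i) / \<sigma> (R (\<theta> ^ i))"
    using R_eq[of "\<theta> ^ i"] sigma_nonzero[OF R] by (simp add: field_simps)
  then have "f = delta (inverse (R (\<theta> ^ i)))"
    by (simp add: delta_def sigma_inverse divide_inverse mult.commute)
  with R show ?thesis by (intro that[of "inverse (R (\<theta> ^ i))"]) simp_all
qed

section \<open>Norm representatives for the fixed part\<close>

lemma norm_eq_1_of_delta_delta_eq_pth_power:
  assumes \<beta>: "\<beta> \<noteq> 0" and f: "f \<noteq> 0" and delta2: "delta (delta \<beta>) = f ^ p"
  shows "N f = 1"
proof -
  define c where "c = delta \<beta>"
  have c: "c \<noteq> 0" "N c = 1" using \<beta> by (simp_all add: c_def delta_nonzero norm_delta)
  have "Q f ^ p = c ^ p"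
    using Q_delta[OF c(1)] c(2) delta2 by (simp add: c_def Q_power)
  then have root: "(Q f / c) ^ p = 1" using c(1) by (simp add: power_divide)
  have "\<sigma> (Q f) = \<sigma> (Q f / c) * \<sigma> c" using c(1) sigma_mult[of "Q f / c" c] by simp
  also have "\<dots> = Q f / c * (c * f ^ p)"
    using sigma_root_of_unity[OF root] sigma_eq_delta[OF c(1)] delta2 by (simp add: c_def)
  finally have "\<sigma> (Q f) = Q f * f ^ p" using c(1) by simp
  moreover have "\<sigma> (Q f) = Q f * (f ^ p / N f)"
    using delta_Q[OF f] sigma_eq_delta[OF Q_nonzero[OF f]] by simp
  ultimately show ?thesis
    using f Q_nonzero[OF f] norm_nonzero[OF f] by (simp add: field_simps)
qed

text \<open>The \<sigma>-fixed factor x below contributes Q x = x^(p(p-1)/2), a p-th power because p is odd.\<close>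
lemma delta_decomposition:
  assumes p: "odd p" and \<beta>: "\<beta> \<noteq> 0" and f: "f \<noteq> 0" and delta2: "delta (delta \<beta>) = f ^ p"
  obtains w g where "w \<noteq> 0" "g \<noteq> 0" "w ^ p = N \<beta>" "delta \<beta> = delta w * (g ^ p / N g)"
proof -
  define c where "c = delta \<beta>"
  have c: "c \<noteq> 0" using \<beta> by (simp add: c_def delta_nonzero)
  obtain g where g: "g \<noteq> 0" and f_eq: "f = delta g"
    using hilbert90 f norm_eq_1_of_delta_delta_eq_pth_power[OF \<beta> f delta2] by blast
  define x where "x = c / g ^ p"
  have "\<sigma> c = c * f ^ p" using sigma_eq_delta[OF c] delta2 by (simp add: c_def)
  moreover have "\<sigma> g = g * f" using sigma_eq_delta[OF g] f_eq by simp
  ultimately have x: "x \<noteq> 0" "\<sigma> x = x"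
    using c f g by (simp_all add: x_def sigma_divide sigma_power power_mult_distrib)
  define h where "h = x ^ ((p - 1) div 2) * Q g"
  have h: "h \<noteq> 0" using x Q_nonzero[OF g] by (simp add: h_def)
  have "\<beta> ^ p / N \<beta> = Q c" using Q_delta[OF \<beta>] by (simp add: c_def)
  also have "\<dots> = Q x * Q g ^ p" using Q_nonzero[OF g] by (simp add: x_def Q_divide Q_power)
  also have "\<dots> = h ^ p"
    using Q_fixed[OF x(2)] sum_lessThan_odd[OF p]
    by (simp add: h_def power_mult_distrib flip: power_mult) (simp add: mult.commute)
  finally have root: "(\<beta> / h) ^ p = N \<beta>"
    using h \<beta> norm_nonzero[OF \<beta>] by (simp add: power_divide field_simps)
  have "delta x = 1" using x by (simp add: delta_def)
  then have "delta h = g ^ p / N g"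
    using delta_Q[OF g] by (simp add: h_def delta_mult delta_power)
  moreover have "delta \<beta> = delta (\<beta> / h) * delta h"
    using h by (simp flip: delta_mult)
  ultimately show ?thesis
    using \<beta> h g root by (intro that[of "\<beta> / h" g]) simp_all
qed

lemma cycmod_fix_eq_norm_span:
  assumes "\<beta> \<noteq> 0" "same_class p ((delta ^^ l) \<beta>) 1" "\<not> same_class p ((delta ^^ (l - 1)) \<beta>) 1"
    and g: "g \<noteq> 0" "(delta ^^ (l - 1)) \<beta> = g ^ p / N g"
  shows "pspan p {N (inverse g)} = cycmod_fix p \<sigma> \<beta>"
proof -
  have "N (inverse g) = (delta ^^ (l - 1)) \<beta> * inverse g ^ p"
    unfolding norm_inverse g(2) using g(1) norm_nonzero[OF g(1)] by (simp add: field_simps)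
  then have "same_class p (N (inverse g)) ((delta ^^ (l - 1)) \<beta>)"
    unfolding same_class_def using g(1) by (intro exI[of _ "inverse g"]) simp
  then have "pspan p {N (inverse g)} = pspan p {(delta ^^ (l - 1)) \<beta>}"
    using funpow_delta_nonzero[OF assms(1)] by (rule pspan_singleton_same_class)
  then show ?thesis
    using cycmod_fix_eq_last_span[OF assms(1-3)] by simp
qed

lemma cycmod_fix_eq_norm_span_of_length_ge_3:
  assumes "odd p" "\<gamma> \<noteq> 0" "3 \<le> l"
    and "same_class p ((delta ^^ l) \<gamma>) 1" "\<not> same_class p ((delta ^^ (l - 1)) \<gamma>) 1"
  shows "\<exists>\<alpha>. \<alpha> \<noteq> 0 \<and> pspan p {N \<alpha>} = cycmod_fix p \<sigma> \<gamma>"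
proof -
  obtain k where l: "l = Suc (Suc (Suc k))"
    using le_Suc_ex[OF assms(3)] by (auto simp: numeral_3_eq_3)
  define \<beta> where "\<beta> = delta ((delta ^^ k) \<gamma>)"
  have \<beta>: "\<beta> \<noteq> 0" "delta \<beta> = (delta ^^ (l - 1)) \<gamma>" "delta (delta \<beta>) = (delta ^^ l) \<gamma>"
    using assms(2) funpow_delta_nonzero delta_nonzero by (simp_all add: \<beta>_def l)
  have norm_\<beta>: "N \<beta> = 1"
    using assms(2) funpow_delta_nonzero by (simp add: \<beta>_def norm_delta)
  obtain f where f: "f \<noteq> 0" "delta (delta \<beta>) = f ^ p"
    using assms(4) \<beta>(3) by (auto simp: same_class_def)
  obtain w g where w: "w \<noteq> 0" "w ^ p = N \<beta>" and g: "g \<noteq> 0" "delta \<beta> = delta w * (g ^ p / N g)"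
    by (rule delta_decomposition[OF assms(1) \<beta>(1) f])
  have "w ^ p = 1" using w(2) norm_\<beta> by simp
  then have "\<sigma> w = w" by (rule sigma_root_of_unity)
  with w have "delta w = 1" by (simp add: delta_def)
  then have "(delta ^^ (l - 1)) \<gamma> = g ^ p / N g" using g \<beta>(2) by simp
  then have "pspan p {N (inverse g)} = cycmod_fix p \<sigma> \<gamma>"
    by (rule cycmod_fix_eq_norm_span[OF assms(2,4,5) g(1)])
  with g(1) show ?thesis by (intro exI[of _ "inverse g"]) simp
qed

text \<open>Here \<delta> w is only a p-th root of unity \<xi>^j; twisting \<gamma> by \<theta>^(-j) removes it, as \<delta> \<theta> = \<xi>.\<close>
lemma cycmod_fix_eq_norm_span_of_length_2:
  assumes "odd p" "\<gamma> \<noteq> 0" "same_class p (delta (delta \<gamma>)) 1" "\<not> same_class p (delta \<gamma>) 1"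
    and untwisted: "\<not> (\<exists>r::int. \<exists>\<gamma>1. \<gamma>1 \<noteq> 0 \<and> same_class p (delta \<gamma>1) 1 \<and> \<gamma> = \<theta> powi r * \<gamma>1)"
  shows "\<exists>t::int. \<exists>\<alpha>. \<alpha> \<noteq> 0 \<and> pspan p {N \<alpha>} = cycmod_fix p \<sigma> (\<theta> powi t * \<gamma>)"
proof -
  obtain f where f: "f \<noteq> 0" "delta (delta \<gamma>) = f ^ p"
    using assms(3) by (auto simp: same_class_def)
  obtain w g where w: "w \<noteq> 0" "w ^ p = N \<gamma>" and g: "g \<noteq> 0" "delta \<gamma> = delta w * (g ^ p / N g)"
    by (rule delta_decomposition[OF assms(1,2) f])
  have "delta w ^ p = 1"
    using w(2) delta_norm[OF assms(2)] by (simp flip: delta_power)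
  then obtain j where j: "delta w = \<xi> ^ j"
    using roots_of_unity_eq_powers[OF prime_p xi_root xi_ne_1] by blast
  define \<eta> where "\<eta> = \<theta> powi (- int j) * \<gamma>"
  have \<theta>j: "\<theta> powi (- int j) = inverse (\<theta> ^ j)" by (simp add: power_int_minus)
  have \<eta>: "\<eta> \<noteq> 0" "\<gamma> = \<theta> powi int j * \<eta>"
    using assms(2) theta_nonzero by (simp_all add: \<eta>_def \<theta>j)
  have delta_\<eta>: "delta \<eta> = g ^ p / N g"
    using g(2) j xi_nonzero by (simp add: \<eta>_def \<theta>j delta_mult delta_inverse delta_power delta_theta)
  have "delta (delta \<eta>) = delta g ^ p"
    by (simp add: delta_\<eta> delta_divide delta_power delta_norm[OF g(1)])
  then have "same_class p ((delta ^^ 2) \<eta>) 1"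
    using g(1) delta_nonzero by (auto simp: same_class_def numeral_2_eq_2)
  moreover have "\<not> same_class p ((delta ^^ (2 - 1)) \<eta>) 1"
  proof
    assume "same_class p ((delta ^^ (2 - 1)) \<eta>) 1"
    with \<eta> have "\<exists>r::int. \<exists>\<gamma>1. \<gamma>1 \<noteq> 0 \<and> same_class p (delta \<gamma>1) 1 \<and> \<gamma> = \<theta> powi r * \<gamma>1"
      by (intro exI[of _ "int j"] exI[of _ \<eta>]) simp
    with untwisted show False ..
  qed
  moreover have "(delta ^^ (2 - 1)) \<eta> = g ^ p / N g"
    using delta_\<eta> by simp
  ultimately have "pspan p {N (inverse g)} = cycmod_fix p \<sigma> \<eta>"
    using cycmod_fix_eq_norm_span[OF \<eta>(1)] g(1) by blast
  with g(1) show ?thesis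
    by (intro exI[of _ "- int j"] exI[of _ "inverse g"]) (simp add: \<eta>_def)
qed

end

theorem lemma1:
  fixes p :: nat and F :: "'k::field set" and \<xi> a \<theta> \<gamma> :: 'k
    and \<sigma> :: "'k \<Rightarrow> 'k" and l :: nat
  assumes p_prime: "prime p" and p_gt2: "p > 2"
    and F_sub: "is_subfield F"
    and char: "of_nat p \<noteq> (0::'k)"
    and xi_F: "\<xi> \<in> F" and xi_root: "\<xi> ^ p = 1" and xi_ne1: "\<xi> \<noteq> 1"
    and a_F: "a \<in> F" and a_ne0: "a \<noteq> 0" and a_nonpow: "\<not> (\<exists>b\<in>F. b ^ p = a)"
    and theta: "\<theta> ^ p = a"
    and K_gen: "gen_field F \<theta> = UNIV"
    and sigma_bij: "bij \<sigma>"
    and sigma_add: "\<And>x y. \<sigma> (x + y) = \<sigma> x + \<sigma> y"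
    and sigma_mult: "\<And>x y. \<sigma> (x * y) = \<sigma> x * \<sigma> y"
    and sigma_F: "\<And>c. c \<in> F \<Longrightarrow> \<sigma> c = c"
    and sigma_theta: "\<sigma> \<theta> = \<xi> * \<theta>"
    and gamma_ne0: "\<gamma> \<noteq> 0"
    and gamma_nontriv: "\<not> same_class p \<gamma> 1"
    and l_in: "same_class p (sigma_minus_one_pow \<sigma> l \<gamma>) 1"
    and l_notin: "\<not> same_class p (sigma_minus_one_pow \<sigma> (l - 1) \<gamma>) 1"
  shows "(3 \<le> l \<and> l \<le> p \<longrightarrow>
            (\<exists>\<alpha>. \<alpha> \<noteq> 0 \<and> pspan p {normK p \<sigma> \<alpha>} = cycmod_fix p \<sigma> \<gamma>))
       \<and> (l = 2 \<and>
          \<not> (\<exists>r::int. \<exists>\<gamma>1. \<gamma>1 \<noteq> 0 \<and> same_class p (\<sigma> \<gamma>1 / \<gamma>1) 1 \<and> \<gamma> = \<theta> powi r * \<gamma>1)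
          \<longrightarrow> (\<exists>t::int. \<exists>\<alpha>. \<alpha> \<noteq> 0 \<and>
                 pspan p {normK p \<sigma> \<alpha>} = cycmod_fix p \<sigma> (\<theta> powi t * \<gamma>)))"
proof -
  have sigma_nonzero: "\<sigma> x \<noteq> 0" if "x \<noteq> 0" for x
    using sigma_mult[of x "inverse x"] sigma_F[of 1] F_sub that by (auto simp: is_subfield_def)
  have sigma_p: "(\<sigma> ^^ p) x = x" for x
    using funpow_eq_id_of_gen_field[OF sigma_add sigma_mult F_sub sigma_F xi_F xi_root sigma_theta K_gen] .
  interpret K: kummer_extension p \<sigma> \<xi> \<theta>
    by unfold_locales (use assms sigma_nonzero sigma_p in auto)
  have p: "odd p" using p_prime p_gt2 prime_odd_nat by blast
  have len: "same_class p ((K.delta ^^ l) \<gamma>) 1" "\<not> same_class p ((K.delta ^^ (l - 1)) \<gamma>) 1"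
    using l_in l_notin by (simp_all add: K.sigma_minus_one_pow_eq)
  show ?thesis
    using K.cycmod_fix_eq_norm_span_of_length_ge_3[OF p gamma_ne0 _ len]
      K.cycmod_fix_eq_norm_span_of_length_2[OF p gamma_ne0] len
    by (auto simp: K.delta_def numeral_2_eq_2)
qed

end
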